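(* Let $L$ be a Linnik constant. Then there is a constant $C>0$ (depending only on $L$) such that: (i) for every positive integer $n$ there exists a positive integer $m\le C n^{2L+1}$ with $d(m)=f(m)=n$; (ii) for every positive integer $n$ there exists a positive integer $m\le C n^{6L+3}$ with $d(m)/f(m)=n$; (iii) for all positive integers $a,b$ with $a\mid b$ and $\gcd\big(b/a,\ a\,\varphi(\mathrm{rad}(b))\big)=1$, there exists a positive integer $m\le C b^{2L+2}/a$ with $f(m)=a$ and $d(m)=b$.
   Context: For a positive integer $m$, let $\varphi(m)$ be Euler's function and $\lambda(m)$ the Carmichael function (the exponent of the multiplicative group $(\mathbb{Z}/m\mathbb{Z})^*$). Let $\mathrm{rad}(m)$ be the product of the distinct primes dividing $m$. Let $\delta=2$ if $4\mid m$ and $\delta=1$ otherwise. Define $$ d(m)=\gcd\big(m,\ \delta\,\varphi(\mathrm{rad}(m))\big),\qquad f(m)=\gcd\big(m,\ \delta\,\lambda(m)\varphi(\mathrm{rad}(m))/\varphi(m)\big). $$ A Linnik constant is a positive number $L$ such that there is an absolute constant $c>0$ with the property that for all integers $1\le a<q$ with $\gcd(a,q)=1$, the smallest prime $p(a,q)$ in the progression $\{a+jq: j\ge 0\}$ satisfies $p(a,q)\le c\, q^L$ (such $L$ exist by Linnik's theorem; e.g. $L=5$ works). *)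

theory Defs
  imports "HOL-Number_Theory.Number_Theory"
begin

definition rad :: "nat \<Rightarrow> nat" where
  "rad m = (\<Prod>p\<in>prime_factors m. p)"

definition carmichael :: "nat \<Rightarrow> nat" where
  "carmichael m = (LEAST e. 0 < e \<and> (\<forall>a. coprime a m \<longrightarrow> [a ^ e = 1] (mod m)))"

definition delta :: "nat \<Rightarrow> nat" where
  "delta m = (if 4 dvd m then 2 else 1)"

definition dfun :: "nat \<Rightarrow> nat" where
  "dfun m = gcd m (delta m * totient (rad m))"

text \<open>The quotient below is always an exact integer division.\<close>
definition ffun :: "nat \<Rightarrow> nat" where
  "ffun m = gcd m (delta m * carmichael m * totient (rad m) div totient m)"

definition linnik_constant :: "real \<Rightarrow> bool" where
  "linnik_constant L \<longleftrightarrow> 0 < L \<and> (\<exists>c>0. \<forall>a q::nat. 1 \<le> a \<and> a < q \<and> coprime a q \<longrightarrow>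
      (\<exists>j. prime (a + j * q) \<and> real (a + j * q) \<le> c * real q powr L))"

end

theory Submission
  imports Defs
begin

(*
  Let N > 0 and let p > 2 be a prime with rad N | p - 1 and (N / rad N) | \<delta>(N) (p - 1).
  Then p divides neither N nor \<phi>(N), so passing from N to N p leaves \<delta> unchanged, multiplies
  \<phi>(rad -) by p - 1 and replaces \<lambda>(N) by lcm(\<lambda>(N), p - 1); as p drops out of both gcds,

    d(N p) = gcd(N, \<delta>(N) \<phi>(rad N) (p - 1)),   f(N p) = gcd(N, \<delta>(N) lcm(\<lambda>(N), p - 1) / (N / rad N)).

  Each part fixes N and a residue class for p making these gcds the prescribed values, and
  Linnik's theorem bounds p by a power of the modulus:
  (i)   N = n, p \<equiv> 1 (mod n\<^sup>2): both gcds equal n;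
  (ii)  N = n G R with R = rad n and G the part of \<delta>(N) \<phi>(R) built from primes of n
        (\<delta>(N) = 2 exactly when n is even), p \<equiv> 1 + N \<phi>(R) (mod N \<phi>(R) R): then d = N and
        f = G R, as the rest of \<delta>(N) \<phi>(R) is coprime to n;
  (iii) N = b rad(b/a), p \<equiv> 1 + a b (mod a b rad(b/a)): then d = b and f = a, provided b/a is
        odd; if b/a is even the coprimality hypothesis forces a = 1 and b = 2^k, and
        N = 2^(k+1), p \<equiv> 1 + 2^(k-1) (mod 2^k) gives d = 2^k, f = 1 (m = 8 when b = 2).
*)

section \<open>Radical and related arithmetic functions\<close>

lemma rad_pos: "0 < rad n"
  unfolding rad_def by (intro prod_pos) (auto simp: in_prime_factors_iff prime_gt_0_nat)

lemma prime_dvd_rad_iff: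
  assumes "prime q" "0 < n"
  shows "q dvd rad n \<longleftrightarrow> q dvd n"
proof
  assume "q dvd rad n"
  then obtain r where "r \<in> prime_factors n" "q dvd r"
    using prime_dvd_prod_iff[of "prime_factors n" q id] assms(1) by (auto simp: rad_def)
  then show "q dvd n"
    using assms(1) by (metis in_prime_factors_iff primes_dvd_imp_eq)
next
  assume "q dvd n"
  then show "q dvd rad n"
    unfolding rad_def using assms by (intro dvd_prodI) (auto simp: in_prime_factors_iff)
qed

lemma prime_factors_rad: "prime_factors (rad n) = prime_factors n"
  using prime_dvd_rad_iff[of _ n] rad_pos[of n]
  by (cases "n = 0") (auto simp: in_prime_factors_iff rad_def)

lemma rad_eqI: "prime_factors m = prime_factors n \<Longrightarrow> rad m = rad n"
  by (simp add: rad_def)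

lemma rad_dvd: "rad n dvd n"
proof (cases "n = 0")
  case False
  have "rad n dvd (\<Prod>p\<in>prime_factors n. p ^ multiplicity p n)"
    unfolding rad_def
    by (intro prod_dvd_prod dvd_power) (auto simp: prime_factors_multiplicity)
  also have "\<dots> = n"
    using False by (simp add: prime_factorization_nat[symmetric])
  finally show ?thesis .
qed simp

lemma div_rad_pos: "0 < n \<Longrightarrow> 0 < n div rad n"
  using rad_dvd[of n] rad_pos[of n] by (simp add: div_greater_zero_iff dvd_imp_le)

lemma div_rad_dvd: "n div rad n dvd n"
  by (metis dvd_div_mult_self dvd_triv_left rad_dvd)

lemma rad_mult_coprime:
  assumes "coprime m n" "0 < m" "0 < n"
  shows "rad (m * n) = rad m * rad n"
proof -
  have "prime_factors m \<inter> prime_factors n = {}"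
    using assms(1) by (auto simp: in_prime_factors_iff dest: coprime_common_divisor_nat)
  then show ?thesis
    using assms(2,3) by (simp add: rad_def prime_factors_product prod.union_disjoint)
qed

lemma rad_prime_power: "prime p \<Longrightarrow> 0 < k \<Longrightarrow> rad (p ^ k) = p"
  by (simp add: rad_def prime_factors_power prime_prime_factors)

lemma coprime_if_coprime_rad:
  assumes "coprime t (rad n)" "0 < n"
  shows "coprime t n"
proof (rule ccontr)
  assume "\<not> coprime t n"
  then obtain q where q: "prime q" "q dvd gcd t n"
    using prime_factor_nat by (metis coprime_iff_gcd_eq_1)
  then have "q dvd t" "q dvd rad n"
    using assms(2) prime_dvd_rad_iff by auto
  with assms(1) q(1) show False
    using coprime_common_divisor not_prime_unit by blast
qed

lemma totient_eq_div_rad_mult_totient_rad: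
  assumes "0 < n"
  shows "totient n = n div rad n * totient (rad n)"
proof -
  have "real (totient n) * real (rad n) = real n * real (totient (rad n))"
    using totient_formula2[of n] totient_formula2[of "rad n"] by (simp add: prime_factors_rad)
  then have "totient n * rad n = n div rad n * rad n * totient (rad n)"
    by (metis of_nat_eq_iff of_nat_mult rad_dvd dvd_div_mult_self)
  then show ?thesis
    using rad_pos[of n] by (simp add: mult.commute mult.left_commute)
qed

lemma prime_dvd_totientD:
  assumes "prime q" "q dvd totient n" "0 < n"
  shows "q dvd n \<or> (\<exists>r\<in>prime_factors n. q dvd r - 1)"
proof -
  obtain r where r: "r \<in> prime_factors n" "q dvd r ^ (multiplicity r n - 1) * (r - 1)"
    using assms totient_formula1[of n] prime_dvd_prod_iff[of "prime_factors n" q] by auto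
  then consider "q dvd r ^ (multiplicity r n - 1)" | "q dvd r - 1"
    using assms(1) prime_dvd_mult_iff by blast
  then show ?thesis
  proof cases
    case 1
    then have "q dvd r" using assms(1) prime_dvd_power by blast
    then show ?thesis using r(1) by (auto intro: dvd_trans)
  qed (use r in auto)
qed

lemma carmichael_eq_Carmichael: "carmichael n = Carmichael n"
  unfolding carmichael_def
proof (rule Least_equality)
  show "0 < Carmichael n \<and> (\<forall>a. coprime a n \<longrightarrow> [a ^ Carmichael n = 1] (mod n))"
    using Carmichael_divides[of n "Carmichael n"] by (auto simp: coprime_commute)
next
  fix e assume e: "0 < e \<and> (\<forall>a. coprime a n \<longrightarrow> [a ^ e = 1] (mod n))"
  show "Carmichael n \<le> e"
  proof (cases "n > 1")
    case True
    have "Carmichael n dvd e" unfolding Carmichael_def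
    proof (intro Lcm_least)
      fix k assume "k \<in> ord n ` totatives n"
      with e show "k dvd e" by (auto simp: totatives_def ord_divides')
    qed
    then show ?thesis using e by (simp add: dvd_imp_le)
  qed (use e in \<open>auto simp: not_less le_Suc_eq\<close>)
qed

lemma delta_dvd_2: "delta n dvd 2"
  by (simp add: delta_def)

lemma delta_mult_odd: "odd p \<Longrightarrow> delta (n * p) = delta n"
  unfolding delta_def
  by (metis coprime_dvd_mult_left_iff coprime_commute coprime_power_right_iff
      odd_imp_coprime_nat power2_eq_square numeral_Bit0 mult_2)

lemma delta_eq_if_even:
  assumes "0 < N" "n * rad n dvd N" "prime_factors N = prime_factors n"
  shows "delta N = (if even n then 2 else 1)"
proof (cases "even n")
  case True
  then have "2 dvd rad n" using assms prime_dvd_rad_iff[of 2 n] by auto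
  with True have "2 * 2 dvd N" using assms(2) by (meson dvd_trans mult_dvd_mono)
  with True show ?thesis by (simp add: delta_def)
next
  case False
  then have "2 \<notin> prime_factors N" using assms(3) by (auto simp: in_prime_factors_iff)
  then have "odd N" using assms(1) by (auto simp: in_prime_factors_iff)
  then have "\<not> 4 dvd N" by (metis dvd_trans even_numeral)
  with False show ?thesis by (simp add: delta_def)
qed

lemma coprime_delta_if_odd: "odd e \<Longrightarrow> coprime e (delta n)"
  using coprime_divisors[OF dvd_refl delta_dvd_2, of e n] by simp

section \<open>Adjoining a prime factor\<close>

lemma rad_mult_prime:
  assumes "0 < N" "prime p" "coprime N p"
  shows "rad (N * p) = rad N * p"
  using rad_mult_coprime[OF assms(3,1)] rad_prime_power[OF assms(2), of 1] assms(2)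
  by (simp add: prime_gt_0_nat)

lemma rad_dvd_pred_imp_coprime_not_dvd_totient:
  assumes "prime p" "0 < N" "rad N dvd p - 1"
  shows "coprime N p" and "\<not> p dvd totient N"
proof -
  have less_p: "q < p" if "prime q" "q dvd N" for q
  proof -
    have "q dvd p - 1"
      using that assms(2,3) prime_dvd_rad_iff dvd_trans by blast
    then show ?thesis
      using prime_gt_1_nat[OF assms(1)] by (auto dest!: dvd_imp_le)
  qed
  then have "\<not> p dvd N" using assms(1) by blast
  then show "coprime N p" using assms(1) prime_imp_coprime coprime_commute by blast
  show "\<not> p dvd totient N"
  proof
    assume "p dvd totient N"
    then obtain q where q: "q \<in> prime_factors N" "p dvd q - 1"
      using prime_dvd_totientD[OF assms(1) _ assms(2)] \<open>\<not> p dvd N\<close> by blast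
    then have "p \<le> q - 1"
      using prime_gt_1_nat[of q] by (intro dvd_imp_le) auto
    moreover have "q < p" using q(1) less_p by auto
    ultimately show False by linarith
  qed
qed

lemma totient_rad_mult_prime:
  assumes "0 < N" "prime p" "coprime N p"
  shows "totient (rad (N * p)) = totient (rad N) * (p - 1)"
proof -
  have "coprime (rad N) p"
    using assms(3) rad_dvd[of N] by (metis coprime_divisors dvd_refl)
  then show ?thesis
    using assms by (simp add: rad_mult_prime totient_mult_coprime totient_prime)
qed

lemma prime_not_dvd_delta: "2 < p \<Longrightarrow> \<not> p dvd delta n"
  using delta_dvd_2[of n] by (metis dvd_trans dvd_imp_le zero_less_numeral not_le)

lemma not_dvd_pred: "1 < p \<Longrightarrow> \<not> p dvd p - (1::nat)"
  using dvd_imp_le[of p "p - 1"] by linarith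

lemma dfun_mult_prime:
  assumes "0 < N" "prime p" "2 < p" "rad N dvd p - 1"
  shows "dfun (N * p) = gcd N (delta N * totient (rad N) * (p - 1))"
proof -
  note p_N = rad_dvd_pred_imp_coprime_not_dvd_totient[OF assms(2,1,4)]
  have "\<not> p dvd totient (rad N)"
    using p_N(2) totient_eq_div_rad_mult_totient_rad[OF assms(1)] by auto
  then have "coprime p (delta N * totient (rad N) * (p - 1))"
    using assms(2,3) prime_not_dvd_delta not_dvd_pred[of p]
    by (intro prime_imp_coprime) (auto simp: prime_dvd_mult_iff)
  moreover have "delta (N * p) = delta N"
    using assms(2,3) by (intro delta_mult_odd prime_odd_nat) auto
  ultimately show ?thesis
    using totient_rad_mult_prime[OF assms(1,2) p_N(1)]
    unfolding dfun_def by (simp add: gcd_mult_left_right_cancel coprime_commute mult.assoc)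
qed

lemma ffun_mult_prime:
  assumes "0 < N" "prime p" "2 < p" "rad N dvd p - 1" "N div rad N dvd delta N * (p - 1)"
  shows "ffun (N * p) = gcd N (delta N * lcm (Carmichael N) (p - 1) div (N div rad N))"
proof -
  define K where "K = N div rad N"
  define lam where "lam = lcm (Carmichael N) (p - 1)"
  define X where "X = delta N * lam div K"
  note p_N = rad_dvd_pred_imp_coprime_not_dvd_totient[OF assms(2,1,4)]
  have "K dvd delta N * lam"
    using assms(5) unfolding K_def lam_def by (rule dvd_trans) (simp add: mult_dvd_mono)
  then have lam_X: "delta N * lam = K * X" by (simp add: X_def)
  have "\<not> p dvd X"
  proof
    assume "p dvd X"
    then have "p dvd delta N * lam" using lam_X by simp
    then have "p dvd lam"
      using prime_not_dvd_delta[OF assms(3)] assms(2) by (simp add: prime_dvd_mult_iff)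
    moreover have "lam dvd Carmichael N * (p - 1)" unfolding lam_def by (intro lcm_least) auto
    ultimately have "p dvd Carmichael N * (p - 1)" by (rule dvd_trans)
    moreover have "\<not> p dvd Carmichael N"
      using p_N(2) Carmichael_dvd_totient dvd_trans by blast
    moreover have "\<not> p dvd p - 1" using assms(3) by (intro not_dvd_pred) simp
    ultimately show False using assms(2) by (simp add: prime_dvd_mult_iff)
  qed
  have "carmichael (N * p) = lam"
    using Carmichael_mult_coprime p_N(1) Carmichael_prime[OF assms(2)]
    by (simp add: carmichael_eq_Carmichael coprime_commute lam_def)
  moreover have "totient (N * p) = K * totient (rad N) * (p - 1)"
    using totient_eq_div_rad_mult_totient_rad[OF assms(1)] p_N(1) assms(2)
    by (simp add: totient_mult_coprime coprime_commute totient_prime K_def)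
  moreover have "delta (N * p) = delta N"
    using assms(2,3) by (intro delta_mult_odd prime_odd_nat) auto
  moreover have "0 < K * totient (rad N) * (p - 1)"
    using assms(1,3) rad_pos[of N] by (simp add: K_def div_rad_pos)
  ultimately have "ffun (N * p) = gcd (N * p) X"
    unfolding ffun_def totient_rad_mult_prime[OF assms(1,2) p_N(1)]
    by (simp add: lam_X mult.assoc)
  also have "\<dots> = gcd N X"
    using \<open>\<not> p dvd X\<close> assms(2)
    by (intro gcd_mult_left_right_cancel) (metis prime_imp_coprime coprime_commute)
  finally show ?thesis by (simp add: X_def K_def lam_def)
qed

section \<open>The three constructions\<close>

lemma lcm_eq_mult_cofactor:
  fixes a b c :: nat
  assumes "a dvd b * c" "0 < b"
  obtains g where "lcm a b = b * g" "g dvd c"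
proof -
  obtain g where g: "lcm a b = b * g" using dvd_lcm2 by (rule dvdE)
  have "lcm a b dvd b * c" using assms(1) by (rule lcm_least) simp
  then have "g dvd c" using assms(2) by (simp add: g nat_mult_dvd_cancel1)
  with g show thesis by (rule that)
qed

lemma exists_n_part_factorization:
  fixes x n :: nat
  assumes "0 < x" "0 < n"
  obtains G H where "x = G * H" "coprime H n" "prime_factors G \<subseteq> prime_factors n"
proof -
  define g where "g k = gcd x (n ^ k)" for k
  \<comment> \<open>the chain g k is nondecreasing and bounded by x, so it stabilises\<close>
  have "\<exists>k. g k = g (Suc k)"
  proof (rule ccontr)
    assume "\<nexists>k. g k = g (Suc k)"
    moreover have "g k \<le> g (Suc k)" for k
      using assms unfolding g_def by (intro dvd_imp_le gcd_mono) auto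
    ultimately have "g k < g (Suc k)" for k
      by (metis order.not_eq_order_implies_strict)
    then have "k + 1 \<le> g k" for k
      using assms by (induction k) (auto simp: g_def Suc_le_eq intro: le_less_trans)
    moreover have "g x \<le> x" using assms by (simp add: g_def)
    ultimately show False by (metis add_le_same_cancel1 not_one_le_zero order.trans)
  qed
  then obtain k where k: "g k = g (Suc k)" by blast
  have g_pos: "0 < g k" using assms by (simp add: g_def)
  have "coprime (x div g k) n"
  proof (rule coprimeI)
    fix d assume d: "d dvd x div g k" "d dvd n"
    have "g k * d dvd x"
      using d(1) g_pos by (metis dvd_div_iff_mult gcd_dvd1 g_def mult.commute not_gr0)
    moreover have "g k * d dvd n ^ Suc k"
      using d(2) unfolding g_def power_Suc by (metis gcd_dvd2 mult.commute mult_dvd_mono)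
    ultimately have "g k * d dvd g (Suc k)" by (simp add: g_def)
    then have "g k * d dvd g k * 1" using k by simp
    then show "is_unit d" using g_pos by (simp add: nat_mult_dvd_cancel_disj)
  qed
  moreover have "x = g k * (x div g k)" by (simp add: g_def)
  moreover have "prime_factors (g k) \<subseteq> prime_factors n"
    using dvd_prime_factors[of "n ^ k" "g k"] assms(2) prime_factors_power[of k n]
    by (cases "k = 0") (auto simp: g_def)
  ultimately show thesis using that by blast
qed

lemma dfun_ffun_n_part_multiple:
  fixes n G H R N p t :: nat
  assumes n_pos: "0 < n" and G_pos: "0 < G" and R: "R = rad n" and N: "N = n * G * R"
    and G_H: "(if even n then 2 else 1) * totient R = G * H" and "coprime H n"
    and pf_G: "prime_factors G \<subseteq> prime_factors n"
    and p: "prime p" "2 < p" "p = 1 + N * totient R * t" and "coprime t n"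
  shows "dfun (N * p) = N" and "ffun (N * p) = G * R"
proof -
  define Ph where "Ph = totient R"
  have R_pos: "0 < R" using R rad_pos by simp
  have N_pos: "0 < N" using n_pos G_pos R_pos by (simp add: N)
  have "prime_factors N = prime_factors n \<union> prime_factors G \<union> prime_factors R"
    using n_pos G_pos R_pos by (simp add: N prime_factors_product)
  then have pf_N: "prime_factors N = prime_factors n"
    by (simp only: R prime_factors_rad Un_absorb2[OF pf_G] Un_absorb)
  then have rad_N: "rad N = R" unfolding R by (rule rad_eqI)
  have delta_N: "delta N = (if even n then 2 else 1)"
    using delta_eq_if_even[OF N_pos _ pf_N] by (simp add: N R)
  have N_dvd: "N dvd p - 1" using p(3) by simp
  have rad_dvd_pred: "rad N dvd p - 1" using rad_dvd N_dvd dvd_trans by blast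
  have K_dvd: "N div rad N dvd delta N * (p - 1)"
    using dvd_trans[OF div_rad_dvd N_dvd] by (rule dvd_mult)
  show "dfun (N * p) = N"
    unfolding dfun_mult_prime[OF N_pos p(1,2) rad_dvd_pred]
    using N_dvd by (intro gcd_nat.absorb1) simp
  define K where "K = N div R"
  have N_K: "N = K * R" using N by (simp add: K_def)
  have "Carmichael N dvd K * Ph"
    using Carmichael_dvd_totient[of N] totient_eq_div_rad_mult_totient_rad[OF N_pos]
    by (simp add: rad_N Ph_def K_def)
  also have "K * Ph dvd p - 1" using p(3) by (simp add: N_K Ph_def)
  finally have "lcm (Carmichael N) (p - 1) = p - 1" by simp
  moreover have "delta N * (p - 1) = K * (R * (G * H) * t)"
  proof -
    define d0 :: nat where "d0 = (if even n then 2 else 1)"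
    have "delta N * (p - 1) = d0 * (N * Ph * t)" by (simp add: delta_N d0_def p(3) Ph_def)
    also have "\<dots> = K * (R * (d0 * Ph) * t)" by (simp add: N_K ac_simps)
    also have "d0 * Ph = G * H" using G_H by (simp add: d0_def Ph_def)
    finally show ?thesis .
  qed
  moreover have "0 < K" using div_rad_pos[OF N_pos] by (simp add: K_def rad_N)
  ultimately have "delta N * lcm (Carmichael N) (p - 1) div (N div rad N) = G * R * (H * t)"
    by (simp add: rad_N ac_simps flip: K_def)
  then have "ffun (N * p) = gcd (G * R * n) (G * R * (H * t))"
    unfolding ffun_mult_prime[OF N_pos p(1,2) rad_dvd_pred K_dvd] by (simp add: N ac_simps)
  also have "\<dots> = G * R * gcd n (H * t)" by (simp add: gcd_mult_distrib_nat)
  also have "gcd n (H * t) = 1"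
    using \<open>coprime H n\<close> \<open>coprime t n\<close> by (simp add: coprime_commute)
  finally show "ffun (N * p) = G * R" by simp
qed

lemma
  assumes b: "b = a * e" and "0 < a" "0 < e" "coprime e a"
  shows rad_cofactor_multiple: "rad (b * rad e) = rad b"
    and div_rad_cofactor_multiple: "b * rad e div rad (b * rad e) = a div rad a * e"
proof -
  have "prime_factors (rad e) \<subseteq> prime_factors b"
    using dvd_prime_factors[of b e] assms(1-3) by (simp add: prime_factors_rad)
  moreover have "prime_factors (b * rad e) = prime_factors b \<union> prime_factors (rad e)"
    using assms(1-3) rad_pos by (simp add: prime_factors_product)
  ultimately have "prime_factors (b * rad e) = prime_factors b" by (simp only: Un_absorb2)
  then show rad_N: "rad (b * rad e) = rad b" by (rule rad_eqI)
  have "a div rad a * rad a = a" by (simp add: rad_dvd)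
  then have "b * rad e = a div rad a * e * (rad a * rad e)"
    unfolding b by (metis mult.assoc mult.commute)
  moreover have "rad b = rad a * rad e"
    unfolding b using assms(2-4) by (simp add: rad_mult_coprime coprime_commute)
  ultimately show "b * rad e div rad (b * rad e) = a div rad a * e"
    unfolding rad_N using rad_pos[of a] rad_pos[of e] by simp
qed

lemma dfun_odd_cofactor_multiple:
  assumes b: "b = a * e" and "0 < a" "0 < e" and cop: "coprime e (a * totient (rad b))"
    and "odd e" and p: "prime p" "2 < p" "p = 1 + a * b * t" and "coprime e t"
  shows "dfun (b * rad e * p) = b"
proof -
  have N_pos: "0 < b * rad e" using assms(1-3) rad_pos[of e] by simp
  have rad_N: "rad (b * rad e) = rad b"
    using rad_cofactor_multiple[OF b assms(2,3)] cop by simp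
  have "b dvd p - 1" using p(3) by simp
  then have "rad (b * rad e) dvd p - 1" unfolding rad_N using rad_dvd dvd_trans by blast
  note dfun_N = dfun_mult_prime[OF N_pos p(1,2) this]
  have "delta (b * rad e) * totient (rad b) * (p - 1) = b * (delta (b * rad e) * totient (rad b) * a * t)"
    by (simp add: p(3) ac_simps)
  then have "dfun (b * rad e * p) = gcd (b * rad e) (b * (delta (b * rad e) * totient (rad b) * a * t))"
    using dfun_N by (simp only: rad_N)
  also have "\<dots> = b * gcd (rad e) (delta (b * rad e) * totient (rad b) * a * t)"
    by (simp only: gcd_mult_distrib_nat)
  also have "gcd (rad e) (delta (b * rad e) * totient (rad b) * a * t) = 1"
  proof -
    have "coprime e (delta (b * rad e) * totient (rad b) * a * t)"
      using coprime_delta_if_odd[OF \<open>odd e\<close>] cop \<open>coprime e t\<close> by simp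
    then have "coprime (rad e) (delta (b * rad e) * totient (rad b) * a * t)"
      by (rule coprime_divisors[OF rad_dvd dvd_refl])
    then show ?thesis by (simp only: coprime_iff_gcd_eq_1)
  qed
  finally show ?thesis by simp
qed

lemma ffun_odd_cofactor_multiple:
  assumes b: "b = a * e" and a_pos: "0 < a" and e_pos: "0 < e"
    and cop: "coprime e (a * totient (rad b))" and "odd e"
    and p: "prime p" "2 < p" "p = 1 + a * b * t" and "coprime e t"
  shows "ffun (b * rad e * p) = a"
proof -
  define N where "N = b * rad e"
  define Ka where "Ka = a div rad a"
  define Ph where "Ph = totient (rad b)"
  have N_pos: "0 < N" using b a_pos e_pos rad_pos[of e] by (simp add: N_def)
  have rad_N: "rad N = rad b"
    using rad_cofactor_multiple[OF b a_pos e_pos] cop by (simp add: N_def)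
  have K_N: "N div rad N = Ka * e"
    using div_rad_cofactor_multiple[OF b a_pos e_pos] cop by (simp add: N_def Ka_def)
  have b_dvd: "b dvd p - 1" using p(3) by simp
  then have rad_dvd_pred: "rad N dvd p - 1" unfolding rad_N using rad_dvd dvd_trans by blast
  have "Ka * e dvd b" by (simp add: Ka_def b div_rad_dvd)
  then have K_dvd_pred: "Ka * e dvd p - 1" using b_dvd by (rule dvd_trans)
  then have K_dvd: "N div rad N dvd delta N * (p - 1)" unfolding K_N by (rule dvd_mult)
  have "Carmichael N dvd Ka * e * Ph"
    using Carmichael_dvd_totient[of N]
      totient_eq_div_rad_mult_totient_rad[OF N_pos, unfolded K_N, unfolded rad_N]
    by (simp add: Ph_def)
  also have "Ka * e * Ph dvd (p - 1) * Ph" using K_dvd_pred by (rule mult_dvd_mono) simp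
  finally have "Carmichael N dvd (p - 1) * Ph" .
  moreover have "0 < p - 1" using p(2) by simp
  ultimately obtain g where g: "lcm (Carmichael N) (p - 1) = (p - 1) * g" and "g dvd Ph"
    by (rule lcm_eq_mult_cofactor)
  then have "coprime e (delta N * rad a * t * g)"
    using cop coprime_delta_if_odd[OF \<open>odd e\<close>] \<open>coprime e t\<close> coprime_divisors[OF dvd_refl rad_dvd]
      coprime_divisors[OF dvd_refl \<open>g dvd Ph\<close>] by (simp add: Ph_def)
  then have coprime_Y: "coprime (e * rad e) (delta N * rad a * t * g)"
    using coprime_divisors[OF rad_dvd dvd_refl] by simp
  have "delta N * lcm (Carmichael N) (p - 1) = delta N * (p - 1) * g"
    unfolding g by (rule mult.assoc[symmetric])
  also have "\<dots> = Ka * e * (a * (delta N * rad a * t * g))"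
    unfolding Ka_def using rad_dvd[of a] by (simp add: p(3) b ac_simps)
  finally have lam_eq: "delta N * lcm (Carmichael N) (p - 1) = Ka * e * (a * (delta N * rad a * t * g))" .
  have "0 < Ka" using div_rad_pos[OF a_pos] by (simp add: Ka_def)
  then have "delta N * lcm (Carmichael N) (p - 1) div (N div rad N) = a * (delta N * rad a * t * g)"
    unfolding K_N lam_eq using e_pos by simp
  then have "ffun (N * p) = gcd N (a * (delta N * rad a * t * g))"
    by (simp only: ffun_mult_prime[OF N_pos p(1,2) rad_dvd_pred K_dvd])
  also have "\<dots> = a * gcd (e * rad e) (delta N * rad a * t * g)"
    by (simp only: N_def b mult.assoc gcd_mult_distrib_nat)
  also have "gcd (e * rad e) (delta N * rad a * t * g) = 1"
    using coprime_Y by (simp only: coprime_iff_gcd_eq_1)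
  finally show ?thesis by (simp add: N_def)
qed

lemma coprime_cofactor_even_imp_two_power:
  assumes "0 < b" "a dvd b" "coprime (b div a) (a * totient (rad b))" "even (b div a)"
  shows "a = 1" "\<exists>k. b = 2 ^ k"
proof -
  \<comment> \<open>an odd \<phi>(rad b) forces rad b \<le> 2\<close>
  have "odd (a * totient (rad b))"
    using assms(3,4) coprime_common_divisor[of "b div a" _ 2] by auto
  then have a_odd: "odd a" and "odd (totient (rad b))" by auto
  then have "rad b \<le> 2" using totient_even[of "rad b"] by (cases "rad b > 2") auto
  moreover have "2 dvd rad b"
    using assms(1,2,4) prime_dvd_rad_iff[of 2 b] by (auto elim: dvd_trans)
  ultimately have "rad b = 2" using rad_pos[of b] by (auto dest: dvd_imp_le)
  then have "prime_factors b = {2}"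
    using prime_factors_rad[of b] by (simp add: prime_prime_factors)
  then show b_pow: "\<exists>k. b = 2 ^ k"
    using prime_factorization_nat[OF assms(1)] by auto
  then obtain i where "a = 2 ^ i" using assms(2) divides_primepow_nat[of 2 a] by auto
  with a_odd show "a = 1" by (cases i) auto
qed

lemma
  assumes k: "2 \<le> k" and p: "prime p" "p = 1 + 2 ^ (k - 1) * t" and "odd t"
  shows dfun_two_power_multiple: "dfun (2 ^ (k + 1) * p) = 2 ^ k"
    and ffun_two_power_multiple: "ffun (2 ^ (k + 1) * p) = 1"
proof -
  define M :: nat where "M = 2 ^ (k - 1)"
  define N :: nat where "N = 2 ^ (k + 1)"
  have "k = Suc (k - 1)" using k by simp
  then have M2: "M * 2 = 2 ^ k" unfolding M_def by (metis power_Suc2)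
  then have N_M: "N = M * 2 * 2" by (simp add: N_def)
  have "2 dvd M" using k by (simp add: M_def)
  have "M * 1 \<le> M * t" using \<open>odd t\<close> by (intro mult_le_mono2) (simp add: Suc_le_eq odd_pos)
  moreover have "2 \<le> M" using \<open>2 dvd M\<close> by (rule dvd_imp_le) (simp add: M_def)
  ultimately have p_gt: "2 < p" using p(2)[folded M_def] by linarith
  have N_pos: "0 < N" by (simp add: N_def)
  have rad_N: "rad N = 2" unfolding N_def by (rule rad_prime_power) simp_all
  have delta_N: "delta N = 2" by (simp add: N_M delta_def)
  have K_N: "N div rad N = M * 2" unfolding rad_N by (simp add: N_M)
  have rad_dvd_pred: "rad N dvd p - 1" using \<open>2 dvd M\<close> p(2) by (simp add: rad_N M_def)
  have K_dvd: "N div rad N dvd delta N * (p - 1)" by (simp add: K_N delta_N p(2) M_def)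
  have "delta N * totient (rad N) * (p - 1) = M * 2 * t"
    unfolding rad_N delta_N p(2) by (simp add: M_def)
  then have "dfun (N * p) = gcd N (M * 2 * t)"
    by (simp only: dfun_mult_prime[OF N_pos p(1) p_gt rad_dvd_pred])
  also have "\<dots> = M * 2 * gcd 2 t"
    by (simp only: N_M gcd_mult_distrib_nat)
  also have "gcd 2 t = 1"
    using \<open>odd t\<close> by (simp add: odd_imp_coprime_nat coprime_commute)
  finally show "dfun (2 ^ (k + 1) * p) = 2 ^ k" using M2 by (simp add: N_def)
  have "Carmichael N = M"
    using k Carmichael_twopow_ge_8[of "k + 1"] by (simp add: N_def M_def)
  then have "ffun (N * p) = gcd N (2 * lcm M (M * t) div (M * 2))"
    unfolding ffun_mult_prime[OF N_pos p(1) p_gt rad_dvd_pred K_dvd] K_N delta_N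
    by (simp add: p(2) M_def)
  also have "\<dots> = gcd N t" using \<open>2 \<le> M\<close> by simp
  also have "\<dots> = 1"
    using \<open>odd t\<close> by (simp add: N_def odd_imp_coprime_nat coprime_commute)
  finally show "ffun (2 ^ (k + 1) * p) = 1" by (simp add: N_def)
qed

lemma dfun_8: "dfun 8 = 2" and ffun_8: "ffun 8 = 1"
proof -
  have "rad 8 = 2" using rad_prime_power[of 2 3] by simp
  moreover have "carmichael 8 = 2"
    using Carmichael_twopow_ge_8[of 3] by (simp add: carmichael_eq_Carmichael)
  moreover have "totient 8 = 4"
    using totient_prime_power[of 2 3] by simp
  ultimately show "dfun 8 = 2" "ffun 8 = 1"
    by (simp_all add: dfun_def ffun_def delta_def)
qed

section \<open>Primes in progressions\<close>

lemma mult_le_powr_bound: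
  fixes x \<alpha> \<beta> c L :: real
  assumes "0 \<le> L" "1 \<le> x" "0 \<le> \<alpha>" "0 \<le> \<beta>" "0 \<le> c"
    and "real N \<le> \<alpha> * x ^ i" "real Q \<le> \<beta> * x ^ j" "real p \<le> c * real Q powr L"
  shows "real (N * p) \<le> \<alpha> * c * \<beta> powr L * x powr (i + j * L)"
proof -
  have "real Q powr L \<le> (\<beta> * x ^ j) powr L"
    using assms by (intro powr_mono2) auto
  also have "\<dots> = \<beta> powr L * x powr (j * L)"
    using assms by (simp add: powr_mult powr_realpow[symmetric] powr_powr)
  finally have "real p \<le> c * (\<beta> powr L * x powr (j * L))"
    using assms(5,8) by (meson mult_left_mono order.trans)
  then have "real N * real p \<le> (\<alpha> * x ^ i) * (c * (\<beta> powr L * x powr (j * L)))"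
    using assms(3,6) by (intro mult_mono) auto
  also have "\<dots> = \<alpha> * c * \<beta> powr L * x powr (i + j * L)"
    using assms(2) by (simp add: powr_add powr_realpow)
  finally show ?thesis by simp
qed

lemma ex_witness_le_mono:
  fixes K C X :: real
  assumes "\<exists>m>0. real m \<le> K * X \<and> P m" "K \<le> C" "0 \<le> X"
  shows "\<exists>m>0. real m \<le> C * X \<and> P m"
proof -
  obtain m where "0 < m" "real m \<le> K * X" "P m" using assms(1) by blast
  moreover have "K * X \<le> C * X" using assms(2,3) by (rule mult_right_mono)
  ultimately show ?thesis by (intro exI[of _ m]) auto
qed

locale linnik_bound =
  fixes L c :: real
  assumes L_pos: "0 < L" and c_pos: "0 < c"
    and prime_in_progression: "\<And>q r :: nat. 2 \<le> q \<Longrightarrow> coprime r q \<Longrightarrow>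
      \<exists>p. prime p \<and> [p = r] (mod q) \<and> real p \<le> c * real q powr L"

lemma linnik_bound_if_linnik_constant:
  assumes "linnik_constant L"
  obtains c where "linnik_bound L c"
proof -
  obtain c where c: "0 < c" and least_prime: "\<And>a q :: nat. 1 \<le> a \<Longrightarrow> a < q \<Longrightarrow> coprime a q \<Longrightarrow>
      \<exists>j. prime (a + j * q) \<and> real (a + j * q) \<le> c * real q powr L"
    using assms unfolding linnik_constant_def by blast
  have "\<exists>p. prime p \<and> [p = r] (mod q) \<and> real p \<le> c * real q powr L"
    if "2 \<le> q" "coprime r q" for q r :: nat
  proof -
    have "coprime (r mod q) q" "r mod q < q"
      using that by (simp_all add: coprime_mod_left_iff)
    moreover have "r mod q \<noteq> 0"
      using that mod_greater_zero_iff_not_dvd by fastforce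
    ultimately obtain j where "prime (r mod q + j * q)" "real (r mod q + j * q) \<le> c * real q powr L"
      using least_prime[of "r mod q" q] by auto
    moreover have "[r mod q + j * q = r] (mod q)" by (simp add: cong_def)
    ultimately show ?thesis by blast
  qed
  moreover have "0 < L" using assms by (simp add: linnik_constant_def)
  ultimately have "linnik_bound L c"
    using c by (simp add: linnik_bound_def)
  then show thesis by (rule that)
qed

context linnik_bound
begin

lemma prime_one_plus_multiple:
  assumes "R dvd M" "2 \<le> M * R"
  obtains p t where "prime p" "p = 1 + M * t" "[t = 1] (mod R)" "M < p"
    "real p \<le> c * real (M * R) powr L"
proof -
  have "coprime (1 + M) M" by simp
  moreover have "coprime (1 + M) R"
    using assms(1) by (meson coprimeI dvd_add_left_iff dvd_trans)
  ultimately have "coprime (1 + M) (M * R)" by simp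
  then have "\<exists>p. prime p \<and> [p = 1 + M] (mod M * R) \<and> real p \<le> c * real (M * R) powr L"
    by (rule prime_in_progression[OF assms(2)])
  then obtain p where p: "prime p" "[p = 1 + M] (mod M * R)" "real p \<le> c * real (M * R) powr L"
    by blast
  have "[p = 1 + M] (mod M)"
    using p(2) by (rule cong_dvd_modulus_nat) simp
  moreover have "[1 + M = 1] (mod M)" unfolding cong_def by (rule mod_add_self2)
  ultimately have "[p = 1] (mod M)" by (rule cong_trans)
  then obtain t where "p - 1 = M * t" by (blast dest: cong_to_1_nat)
  then have t: "p = 1 + M * t" using prime_gt_0_nat[OF p(1)] by linarith
  have "[1 + M * t = 1 + M * 1] (mod M * R)"
    using p(2) unfolding t by simp
  then have "[M * t = M * 1] (mod M * R)"
    by (simp only: cong_add_lcancel_nat)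
  then have "[t = 1] (mod R)"
    using assms(2) by (auto simp: cong_def mod_mult_mult1)
  moreover have "t \<noteq> 0" using p(1) t by (metis add.right_neutral mult_0_right not_prime_1)
  moreover have "M < p"
  proof -
    have "M * 1 \<le> M * t" using \<open>t \<noteq> 0\<close> by (intro mult_le_mono2) simp
    then show ?thesis using t by linarith
  qed
  ultimately show thesis
    using that p(1,3) t by blast
qed

lemma dfun_ffun_eq_witness_ge_2:
  assumes "2 \<le> n"
  shows "\<exists>m>0. real m \<le> c * real n powr (2 * L + 1) \<and> dfun m = n \<and> ffun m = n"
proof -
  have n_sq: "4 \<le> n\<^sup>2" using mult_le_mono[OF assms assms] by (simp add: power2_eq_square)
  then have "2 \<le> n\<^sup>2 * 1" by simp
  then obtain p t where p: "prime p" "p = 1 + n\<^sup>2 * t" "n\<^sup>2 < p"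
    and p_le: "real p \<le> c * real (n\<^sup>2 * 1) powr L"
    using prime_one_plus_multiple[of 1 "n\<^sup>2"] by auto
  have nn_dvd: "n * n dvd p - 1" using p(2) by (simp add: power2_eq_square)
  then have n_dvd: "n dvd p - 1" using dvd_mult_left by blast
  have p_gt: "2 < p" using n_sq p(3) by linarith
  have n_pos: "0 < n" using assms by simp
  have rad_dvd_pred: "rad n dvd p - 1"
    using n_dvd rad_dvd dvd_trans by blast
  have K_dvd: "n div rad n dvd delta n * (p - 1)"
    using dvd_trans[OF div_rad_dvd n_dvd] by (rule dvd_mult)
  have "dfun (n * p) = n"
    unfolding dfun_mult_prime[OF n_pos p(1) p_gt rad_dvd_pred]
    using n_dvd by (intro gcd_nat.absorb1) simp
  moreover have "ffun (n * p) = n"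
  proof -
    have "n div rad n * n dvd n * n" using div_rad_dvd by (rule mult_dvd_mono) simp
    also note nn_dvd
    also have "p - 1 dvd delta n * lcm (Carmichael n) (p - 1)" by simp
    finally have K_n: "n div rad n * n dvd delta n * lcm (Carmichael n) (p - 1)" .
    then have "n dvd delta n * lcm (Carmichael n) (p - 1) div (n div rad n)"
      using div_rad_pos[OF n_pos] dvd_mult_left[OF K_n] by (simp add: dvd_div_iff_mult mult.commute)
    then show ?thesis
      unfolding ffun_mult_prime[OF n_pos p(1) p_gt rad_dvd_pred K_dvd] by (rule gcd_nat.absorb1)
  qed
  moreover have "real (n * p) \<le> c * real n powr (2 * L + 1)"
    using mult_le_powr_bound[where x = n and \<alpha> = 1 and \<beta> = 1 and i = 1 and j = 2, OF _ _ _ _ _ _ _ p_le]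
      L_pos c_pos assms by (simp add: algebra_simps)
  ultimately show ?thesis using n_pos p(1) prime_gt_0_nat by (intro exI[of _ "n * p"]) auto
qed

lemma dfun_div_ffun_eq_witness_ge_2:
  assumes "2 \<le> n"
  shows "\<exists>m>0. real m \<le> 2 powr (1 + L) * c * real n powr (6 * L + 3) \<and>
    real (dfun m) / real (ffun m) = real n"
proof -
  have n_pos: "0 < n" using assms by simp
  define R where "R = rad n"
  define Ph where "Ph = totient R"
  have R_pos: "0 < R" and Ph_pos: "0 < Ph" using rad_pos[of n] by (simp_all add: R_def Ph_def)
  have x_pos: "0 < (if even n then 2 else 1) * Ph" using Ph_pos by simp
  obtain G H where G_H: "(if even n then 2 else 1) * Ph = G * H" and "coprime H n"
    and pf_G: "prime_factors G \<subseteq> prime_factors n"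
    by (rule exists_n_part_factorization[OF x_pos n_pos])
  have G_pos: "0 < G" and H_pos: "0 < H" using x_pos unfolding G_H by simp_all
  define N where "N = n * G * R"
  have n_le_N: "n \<le> N" using G_pos R_pos by (simp add: N_def)
  have N_le: "N * 1 \<le> N * Ph" "N * Ph * 1 \<le> N * Ph * R"
    using Ph_pos R_pos by (intro mult_le_mono; simp)+
  then have "2 \<le> N * Ph * R" using assms n_le_N by linarith
  moreover have "R dvd N * Ph" by (simp add: N_def)
  ultimately obtain p t where p: "prime p" "p = 1 + N * Ph * t" "[t = 1] (mod R)" "N * Ph < p"
    and p_le: "real p \<le> c * real (N * Ph * R) powr L"
    using prime_one_plus_multiple[of R "N * Ph"] by auto
  have p_gt: "2 < p" using assms n_le_N N_le p(4) by linarith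
  have "coprime t n"
    using cong_imp_coprime[OF cong_sym[OF p(3)]] coprime_if_coprime_rad[of t n] n_pos
    by (simp add: R_def)
  note dfun_ffun_Np = dfun_ffun_n_part_multiple[OF n_pos G_pos R_def N_def G_H[unfolded Ph_def]
      \<open>coprime H n\<close> pf_G p(1) p_gt p(2)[unfolded Ph_def] \<open>coprime t n\<close>]
  have "real (N * p) \<le> 2 powr (1 + L) * c * real n powr (6 * L + 3)"
  proof -
    have R_le: "R \<le> n" using rad_dvd n_pos by (simp add: R_def dvd_imp_le)
    have Ph_le: "Ph \<le> n" using totient_le[of R] R_le by (simp add: Ph_def)
    have "G \<le> G * H" using H_pos by simp
    also have "\<dots> \<le> 2 * n" using Ph_le by (simp flip: G_H)
    finally have "N \<le> n * (2 * n) * n" unfolding N_def using R_le by (intro mult_le_mono) auto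
    then have N_le: "N \<le> 2 * n ^ 3" by (simp add: power3_eq_cube ac_simps)
    then have "real N \<le> 2 * real n ^ 3" by (simp flip: of_nat_power)
    moreover have "N * Ph * R \<le> 2 * n ^ 3 * n * n" using N_le Ph_le R_le by (intro mult_le_mono)
    then have "N * Ph * R \<le> 2 * n ^ 5" by (simp add: eval_nat_numeral ac_simps)
    then have "real (N * Ph * R) \<le> real (2 * n ^ 5)" by (rule of_nat_mono)
    ultimately have "real (N * p) \<le> 2 * c * 2 powr L * real n powr (3 + 5 * L)"
      using mult_le_powr_bound[where x = n and i = 3 and j = 5, OF _ _ _ _ _ _ _ p_le]
        L_pos c_pos assms by simp
    also have "\<dots> \<le> 2 * c * 2 powr L * real n powr (6 * L + 3)"
      using assms L_pos c_pos by (intro mult_left_mono powr_mono) auto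
    also have "\<dots> = 2 powr (1 + L) * c * real n powr (6 * L + 3)" by (simp add: powr_add)
    finally show ?thesis .
  qed
  then show ?thesis
    using dfun_ffun_Np N_def n_pos G_pos R_pos prime_gt_0_nat[OF p(1)] by (intro exI[of _ "N * p"]) auto
qed

lemma ffun_1_dfun_two_power_witness:
  assumes "2 \<le> k"
  shows "\<exists>m>0. real m \<le> 2 * c * real (2 ^ k) powr (2 * L + 2) \<and> ffun m = 1 \<and> dfun m = 2 ^ k"
proof -
  define M :: nat where "M = 2 ^ (k - 1)"
  have "k = Suc (k - 1)" using assms by simp
  then have M2: "M * 2 = 2 ^ k" unfolding M_def by (metis power_Suc2)
  have "2 dvd M" using assms by (simp add: M_def)
  moreover have M2_ge: "2 \<le> M * 2" using M2 assms by (metis one_le_numeral power_increasing power_one_right le_trans)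
  ultimately obtain p t where p: "prime p" "p = 1 + M * t" "[t = 1] (mod 2)" "M < p"
    and p_le: "real p \<le> c * real (M * 2) powr L"
    by (rule prime_one_plus_multiple)
  have "odd t" using p(3) by (simp add: cong_def odd_iff_mod_2_eq_one)
  note dfun_ffun_Np = dfun_two_power_multiple[OF assms p(1) p(2)[unfolded M_def] \<open>odd t\<close>]
    ffun_two_power_multiple[OF assms p(1) p(2)[unfolded M_def] \<open>odd t\<close>]
  have "real ((2 ^ (k + 1)) * p) \<le> 2 * c * 1 powr L * real (M * 2) powr (real 1 + real 1 * L)"
    using L_pos c_pos M2_ge M2 by (intro mult_le_powr_bound[OF _ _ _ _ _ _ _ p_le]) auto
  also have "\<dots> \<le> 2 * c * real (2 ^ k) powr (2 * L + 2)"
    using M2 L_pos c_pos M2_ge by (simp add: powr_mono)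
  finally show ?thesis
    using dfun_ffun_Np prime_gt_0_nat[OF p(1)] by (intro exI[of _ "2 ^ (k + 1) * p"]) auto
qed

lemma ffun_dfun_eq_witness_odd_cofactor:
  assumes "2 \<le> b" "a dvd b" "coprime (b div a) (a * totient (rad b))" "odd (b div a)"
  shows "\<exists>m>0. real m \<le> c * real b powr (2 * L + 2) / real a \<and> ffun m = a \<and> dfun m = b"
proof -
  define e where "e = b div a"
  have b: "b = a * e" using assms(2) by (simp add: e_def)
  then have a_pos: "0 < a" and e_pos: "0 < e" using assms(1) by (auto intro!: Nat.gr0I)
  have cop: "coprime e (a * totient (rad b))" and "odd e" using assms(3,4) by (simp_all add: e_def)
  have b_le: "b \<le> a * b" using a_pos by simp
  moreover have "a * b * 1 \<le> a * b * rad e" using rad_pos[of e] by (intro mult_le_mono) auto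
  ultimately have "2 \<le> a * b * rad e" using assms(1) by linarith
  moreover have "rad e dvd a * b" using rad_dvd[of e] by (simp add: b)
  ultimately obtain p t where p: "prime p" "p = 1 + a * b * t" "[t = 1] (mod rad e)" "a * b < p"
    and p_le: "real p \<le> c * real (a * b * rad e) powr L"
    using prime_one_plus_multiple by blast
  have p_gt: "2 < p" using assms(1) b_le p(4) by linarith
  have "coprime e t"
    using cong_imp_coprime[OF cong_sym[OF p(3)]] coprime_if_coprime_rad[of t e] e_pos
    by (simp add: coprime_commute)
  note dfun_ffun_Np = dfun_odd_cofactor_multiple[OF b a_pos e_pos cop \<open>odd e\<close> p(1) p_gt p(2) \<open>coprime e t\<close>]
    ffun_odd_cofactor_multiple[OF b a_pos e_pos cop \<open>odd e\<close> p(1) p_gt p(2) \<open>coprime e t\<close>]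
  have "a * rad e \<le> b" using b rad_dvd[of e] e_pos by (simp add: dvd_imp_le)
  then have "b * rad e * a \<le> b ^ 2" "a * b * rad e \<le> b ^ 2"
    by (simp_all add: power2_eq_square mult_le_mono ac_simps)
  then have "real (b * rad e) \<le> 1 / real a * real b ^ 2" "real (a * b * rad e) \<le> 1 * real b ^ 2"
    using a_pos by (simp_all add: field_simps flip: of_nat_power of_nat_mult)
  then have "real (b * rad e * p) \<le> 1 / real a * c * 1 powr L * real b powr (real 2 + real 2 * L)"
    using L_pos c_pos assms(1) by (intro mult_le_powr_bound[OF _ _ _ _ _ _ _ p_le]) auto
  then have "real (b * rad e * p) \<le> c * real b powr (2 * L + 2) / real a"
    by (simp add: algebra_simps)
  then show ?thesis
    using dfun_ffun_Np b a_pos e_pos rad_pos[of e] prime_gt_0_nat[OF p(1)]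
    by (intro exI[of _ "b * rad e * p"]) auto
qed

definition C :: real where
  "C = 2 powr (1 + L) * c + 8"

lemma C_bounds: "c \<le> C" "2 * c \<le> C" "2 powr (1 + L) * c \<le> C" "8 \<le> C"
proof -
  have "2 powr 1 \<le> 2 powr (1 + L)" using L_pos by (intro powr_mono) auto
  then have "2 * c \<le> 2 powr (1 + L) * c" using c_pos by (intro mult_right_mono) auto
  then show "c \<le> C" "2 * c \<le> C" "2 powr (1 + L) * c \<le> C" "8 \<le> C"
    using c_pos unfolding C_def by linarith+
qed

lemma exists_dfun_ffun_eq:
  assumes "0 < n"
  shows "\<exists>m>0. real m \<le> C * real n powr (2 * L + 1) \<and> dfun m = n \<and> ffun m = n"
proof (cases "n = 1")
  case True
  then show ?thesis using C_bounds(4) by (intro exI[of _ 1]) (simp add: dfun_def ffun_def)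
next
  case False
  with assms have "2 \<le> n" by simp
  then show ?thesis
    by (rule ex_witness_le_mono[OF dfun_ffun_eq_witness_ge_2 C_bounds(1)]) simp
qed

lemma exists_dfun_div_ffun_eq:
  assumes "0 < n"
  shows "\<exists>m>0. real m \<le> C * real n powr (6 * L + 3) \<and> real (dfun m) / real (ffun m) = real n"
proof (cases "n = 1")
  case True
  then show ?thesis using C_bounds(4) by (intro exI[of _ 1]) (simp add: dfun_def ffun_def)
next
  case False
  with assms have "2 \<le> n" by simp
  then show ?thesis
    by (rule ex_witness_le_mono[OF dfun_div_ffun_eq_witness_ge_2 C_bounds(3)]) simp
qed

lemma exists_ffun_dfun_eq:
  assumes "0 < a" "0 < b" "a dvd b" "coprime (b div a) (a * totient (rad b))"
  shows "\<exists>m>0. real m \<le> C * real b powr (2 * L + 2) / real a \<and> ffun m = a \<and> dfun m = b"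
proof -
  have mono: "\<exists>m>0. real m \<le> C * real b powr (2 * L + 2) / real a \<and> ffun m = a \<and> dfun m = b"
    if "\<exists>m>0. real m \<le> K * real b powr (2 * L + 2) / real a \<and> ffun m = a \<and> dfun m = b"
      and "K \<le> C" for K
    using ex_witness_le_mono[where X = "real b powr (2 * L + 2) / real a"] that
    by (simp add: times_divide_eq_right)
  consider "b = 1" | "2 \<le> b" "odd (b div a)" | "2 \<le> b" "even (b div a)"
    using assms(2) by linarith
  then show ?thesis
  proof cases
    case 1
    moreover from 1 have "a = 1" using assms(3) by simp
    moreover have "1 \<le> C" using C_bounds(4) by simp
    ultimately show ?thesis by (intro exI[of _ 1]) (simp add: dfun_def ffun_def)
  next
    case 2
    then show ?thesis using ffun_dfun_eq_witness_odd_cofactor[of b a] assms C_bounds(1) by (intro mono) auto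
  next
    case 3
    obtain k where a: "a = 1" and b: "b = 2 ^ k"
      using coprime_cofactor_even_imp_two_power[OF assms(2-4) 3(2)] by blast
    have "k \<noteq> 0" using 3(1) b by (cases k) auto
    then consider "k = 1" | "2 \<le> k" by linarith
    then show ?thesis
    proof cases
      case 1
      have "1 \<le> real b powr (2 * L + 2)" using 3(1) L_pos by (intro ge_one_powr_ge_zero) auto
      moreover note C_bounds(4)
      ultimately have "C * 1 \<le> C * real b powr (2 * L + 2)" by (intro mult_left_mono) auto
      with C_bounds(4) have "8 \<le> C * real b powr (2 * L + 2)" by linarith
      then show ?thesis using 1 a b by (intro exI[of _ 8]) (auto simp: dfun_8 ffun_8)
    next
      case 2
      have "\<exists>m>0. real m \<le> 2 * c * real b powr (2 * L + 2) / real a \<and> ffun m = a \<and> dfun m = b"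
        using ffun_1_dfun_two_power_witness[OF 2] a b by simp
      then show ?thesis using C_bounds(2) by (intro mono)
    qed
  qed
qed

end

theorem theorem1p3:
  fixes L :: real
  assumes "linnik_constant L"
  shows "\<exists>C>0.
    (\<forall>n::nat. 0 < n \<longrightarrow> (\<exists>m::nat. 0 < m \<and> real m \<le> C * real n powr (2 * L + 1) \<and>
        dfun m = n \<and> ffun m = n)) \<and>
    (\<forall>n::nat. 0 < n \<longrightarrow> (\<exists>m::nat. 0 < m \<and> real m \<le> C * real n powr (6 * L + 3) \<and>
        real (dfun m) / real (ffun m) = real n)) \<and>
    (\<forall>a b::nat. 0 < a \<and> 0 < b \<and> a dvd b \<and> gcd (b div a) (a * totient (rad b)) = 1 \<longrightarrow>
        (\<exists>m::nat. 0 < m \<and> real m \<le> C * real b powr (2 * L + 2) / real a \<and>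
           ffun m = a \<and> dfun m = b))"
proof -
  obtain c where "linnik_bound L c"
    using linnik_bound_if_linnik_constant[OF assms] .
  then interpret linnik_bound L c .
  show ?thesis
  proof (intro exI[of _ C] conjI allI impI)
    show "0 < C" using C_bounds(4) by linarith
  next
    fix a b :: nat
    assume ab: "0 < a \<and> 0 < b \<and> a dvd b \<and> gcd (b div a) (a * totient (rad b)) = 1"
    then have "coprime (b div a) (a * totient (rad b))"
      by (simp only: coprime_iff_gcd_eq_1)
    then show "\<exists>m. 0 < m \<and> real m \<le> C * real b powr (2 * L + 2) / real a \<and> ffun m = a \<and> dfun m = b"
      using ab by (intro exists_ffun_dfun_eq) auto
  qed (simp_all add: exists_dfun_ffun_eq exists_dfun_div_ffun_eq)
qed

end
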